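(* For every instance $(A,C,k)$ there exist committees $W$ and $W'$, each with representation ratio at least $\frac34$, such that $W$ satisfies EJR+ and $W'$ satisfies FJR.
   Context: An instance $(A,C,k)$ consists of a finite nonempty candidate set $C$, voters $N=\{1,\dots,n\}$, approval sets $A_i\subseteq C$, and a committee size $1\le k\le|C|$. A committee is $W\subseteq C$ with $|W|\le k$. $\mathrm{cov}(W)=|\{i: A_i\cap W\ne\emptyset\}|$; the representation ratio is $\mathrm{cov}(W)/\max\{\mathrm{cov}(W'):|W'|=k\}$. $W$ satisfies EJR+ if for every $\ell\in\{1,\dots,k\}$ and every $N'\subseteq N$ with $|N'|\ge\ell n/k$ and $\bigcap_{i\in N'}A_i\ne\emptyset$, either some $i\in N'$ has $|A_i\cap W|\ge\ell$ or $\bigcap_{i\in N'}A_i\subseteq W$. (Fully justified representation) For a positive integer $\beta$ and $T\subseteq C$, a group $S\subseteq N$ is weakly $(\beta,T)$-cohesive if $|S|\ge |T|\frac{n}{k}$ and $|A_i\cap T|\ge\beta$ for all $i\in S$; $W$ satisfies FJR if for every such $\beta,T$ and every weakly $(\beta,T)$-cohesive group $S$ there is $i\in S$ with $|A_i\cap W|\ge\beta$. *)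

theory Defs
  imports Complex_Main
begin

definition is_instance :: "'c set \<Rightarrow> nat \<Rightarrow> (nat \<Rightarrow> 'c set) \<Rightarrow> nat \<Rightarrow> bool" where
  "is_instance C n A k \<longleftrightarrow> finite C \<and> C \<noteq> {} \<and> (\<forall>i\<in>{1..n}. A i \<subseteq> C) \<and> 1 \<le> k \<and> k \<le> card C"

definition is_committee :: "'c set \<Rightarrow> nat \<Rightarrow> 'c set \<Rightarrow> bool" where
  "is_committee C k W \<longleftrightarrow> W \<subseteq> C \<and> card W \<le> k"

definition cov :: "nat \<Rightarrow> (nat \<Rightarrow> 'c set) \<Rightarrow> 'c set \<Rightarrow> nat" where
  "cov n A W = card {i \<in> {1..n}. A i \<inter> W \<noteq> {}}"

definition max_cov :: "'c set \<Rightarrow> nat \<Rightarrow> (nat \<Rightarrow> 'c set) \<Rightarrow> nat \<Rightarrow> nat" where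
  "max_cov C n A k = Max {cov n A W' | W'. W' \<subseteq> C \<and> card W' = k}"

text \<open>Representation ratio; convention: ratio 1 if the optimal coverage is 0 (then 0/0).\<close>
definition rep_ratio :: "'c set \<Rightarrow> nat \<Rightarrow> (nat \<Rightarrow> 'c set) \<Rightarrow> nat \<Rightarrow> 'c set \<Rightarrow> real" where
  "rep_ratio C n A k W =
     (if max_cov C n A k = 0 then 1 else real (cov n A W) / real (max_cov C n A k))"

definition EJR_plus :: "nat \<Rightarrow> (nat \<Rightarrow> 'c set) \<Rightarrow> nat \<Rightarrow> 'c set \<Rightarrow> bool" where
  "EJR_plus n A k W \<longleftrightarrow>
     (\<forall>l\<in>{1..k}. \<forall>N'. N' \<subseteq> {1..n} \<and> N' \<noteq> {} \<and>
        real (card N') \<ge> real l * real n / real k \<and> (\<Inter>i\<in>N'. A i) \<noteq> {} \<longrightarrow>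
        (\<exists>i\<in>N'. card (A i \<inter> W) \<ge> l) \<or> (\<Inter>i\<in>N'. A i) \<subseteq> W)"

definition weakly_cohesive :: "nat \<Rightarrow> (nat \<Rightarrow> 'c set) \<Rightarrow> nat \<Rightarrow> nat \<Rightarrow> 'c set \<Rightarrow> nat set \<Rightarrow> bool" where
  "weakly_cohesive n A k \<beta> T S \<longleftrightarrow>
     real (card S) \<ge> real (card T) * real n / real k \<and> (\<forall>i\<in>S. card (A i \<inter> T) \<ge> \<beta>)"

definition FJR :: "'c set \<Rightarrow> nat \<Rightarrow> (nat \<Rightarrow> 'c set) \<Rightarrow> nat \<Rightarrow> 'c set \<Rightarrow> bool" where
  "FJR C n A k W \<longleftrightarrow>
     (\<forall>\<beta> T S. \<beta> \<ge> 1 \<and> T \<subseteq> C \<and> S \<subseteq> {1..n} \<and> S \<noteq> {} \<and> weakly_cohesive n A k \<beta> T S \<longrightarrow>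
        (\<exists>i\<in>S. card (A i \<inter> W) \<ge> \<beta>))"

end

theory Submission
  imports Defs
begin

(*
  Both committees complete a committee W that carries a price system: each voter has budget 1
  and pays only for members of W once W represents her, and each member of W collects at
  least n/k. Summing the payments gives |W| n <= k cov(W), in particular |W| <= k.

  Such W are built greedily: take a violation of maximal level and add its missing candidates,
  paid in equal shares by the violating group. For EJR+ the invariant caps every payment at 1/l
  while an l-violation persists, so each member of an l-violating group has spent at most
  (l-1)/l and can afford a share of at most 1/l. For FJR only voters satisfied at every violated
  level pay anything, so the members of a maximal violating group have spent nothing yet.
  Hence a W of maximal size satisfying the respective invariant has no violation.

  To complete W, let B be an optimal committee and U the voters not covered by W. Dropping
  members of B with at most average marginal coverage of U leaves F of size k - |W| that covers
  at least a fraction (k - |W|)/k >= 1 - w/n of the at least opt - w voters of U covered by B,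
  where w = cov(W). Finally w + (1 - w/n)(opt - w) >= w + (opt - w)^2/opt >= 3/4 opt, and EJR+
  and FJR are preserved when W grows.
*)

definition cov_among :: "nat set \<Rightarrow> (nat \<Rightarrow> 'c set) \<Rightarrow> 'c set \<Rightarrow> nat" where
  "cov_among U A F = card {i\<in>U. A i \<inter> F \<noteq> {}}"

lemma cov_eq_cov_among: "cov n A W = cov_among {1..n} A W"
  by (simp add: cov_def cov_among_def)

lemma cov_among_mono:
  assumes "finite U" "F \<subseteq> G"
  shows "cov_among U A F \<le> cov_among U A G"
  unfolding cov_among_def by (rule card_mono) (use assms in auto)

lemma cov_among_Un:
  assumes "finite U"
  shows "cov_among U A (W \<union> F) = cov_among U A W + cov_among {i\<in>U. A i \<inter> W = {}} A F"
proof -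
  have "{i\<in>U. A i \<inter> (W \<union> F) \<noteq> {}} =
        {i\<in>U. A i \<inter> W \<noteq> {}} \<union> {i\<in>{i\<in>U. A i \<inter> W = {}}. A i \<inter> F \<noteq> {}}"
    by blast
  then show ?thesis
    unfolding cov_among_def by (simp add: card_Un_disjoint assms disjoint_iff)
qed

lemma sum_cov_among_loss_le:
  assumes "finite U" "finite B"
  shows "(\<Sum>x\<in>B. cov_among U A B - cov_among U A (B - {x})) \<le> cov_among U A B"
proof -
  have loss: "cov_among U A B - cov_among U A (B - {x}) = card {i\<in>U. A i \<inter> B = {x}}" if "x \<in> B" for x
  proof -
    have "B = (B - {x}) \<union> {x}" using that by blast
    then have "cov_among U A B = cov_among U A (B - {x}) + cov_among {i\<in>U. A i \<inter> (B - {x}) = {}} A {x}"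
      by (metis cov_among_Un assms(1))
    moreover have "{i\<in>{i\<in>U. A i \<inter> (B - {x}) = {}}. A i \<inter> {x} \<noteq> {}} = {i\<in>U. A i \<inter> B = {x}}"
      using that by blast
    ultimately show ?thesis by (simp add: cov_among_def)
  qed
  have "(\<Sum>x\<in>B. card {i\<in>U. A i \<inter> B = {x}}) = card (\<Union>x\<in>B. {i\<in>U. A i \<inter> B = {x}})"
    by (rule card_UN_disjoint[symmetric]) (use assms in auto)
  also have "\<dots> \<le> cov_among U A B"
    unfolding cov_among_def by (rule card_mono) (use assms in auto)
  finally show ?thesis using loss by simp
qed

lemma exists_le_average_nat:
  fixes f :: "'a \<Rightarrow> nat"
  assumes "finite B" "B \<noteq> {}" "sum f B \<le> c"
  shows "\<exists>x\<in>B. f x * card B \<le> c"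
proof (rule ccontr)
  assume "\<not> ?thesis"
  then have "(\<Sum>x\<in>B. c) < (\<Sum>x\<in>B. f x * card B)"
    by (intro sum_strict_mono) (use assms in auto)
  also have "(\<Sum>x\<in>B. f x * card B) = sum f B * card B"
    by (rule sum_distrib_right[symmetric])
  finally have "c * card B < sum f B * card B"
    by (simp add: mult.commute)
  with assms(3) show False
    by (meson leD mult_le_mono1)
qed

lemma exists_remove_one_cov_among_ge:
  assumes "finite U" "finite B" "B \<noteq> {}"
  shows "\<exists>x\<in>B. (card B - 1) * cov_among U A B \<le> cov_among U A (B - {x}) * card B"
proof -
  obtain x where x: "x \<in> B"
    and small_loss: "(cov_among U A B - cov_among U A (B - {x})) * card B \<le> cov_among U A B"
    using exists_le_average_nat[OF assms(2,3) sum_cov_among_loss_le[OF assms(1,2)]] by blast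
  have "cov_among U A (B - {x}) \<le> cov_among U A B"
    by (rule cov_among_mono) (use assms in auto)
  with small_loss have "cov_among U A B * card B - cov_among U A B \<le> cov_among U A (B - {x}) * card B"
    by (simp add: diff_mult_distrib)
  moreover have "(card B - 1) * cov_among U A B = cov_among U A B * card B - cov_among U A B"
    by (metis diff_mult_distrib2 mult.commute nat_mult_1_right)
  ultimately show ?thesis
    using x by auto
qed

lemma exists_subset_cov_among_ge:
  assumes "finite U" "finite B" "f \<le> card B"
  shows "\<exists>F\<subseteq>B. card F = f \<and> f * cov_among U A B \<le> cov_among U A F * card B"
  using assms(2,3)
proof (induction "card B - f" arbitrary: B)
  case 0
  then show ?case by (intro exI[of _ B]) auto
next
  case (Suc d)
  show ?case
  proof (cases "f = 0")
    case True
    then show ?thesis by (intro exI[of _ "{}"]) auto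
  next
    case False
    obtain x where x: "x \<in> B"
      and drop: "(card B - 1) * cov_among U A B \<le> cov_among U A (B - {x}) * card B"
      using exists_remove_one_cov_among_ge[OF assms(1) Suc.prems(1)] Suc.hyps(2) by fastforce
    have card_rest: "card (B - {x}) = card B - 1"
      using x Suc.prems(1) by simp
    have "d = card (B - {x}) - f" "f \<le> card (B - {x})"
      using Suc.hyps(2) card_rest by simp_all
    then obtain F where F: "F \<subseteq> B - {x}" "card F = f"
      and avg: "f * cov_among U A (B - {x}) \<le> cov_among U A F * (card B - 1)"
      using Suc.hyps(1) Suc.prems(1) card_rest by (metis finite_Diff)
    have "f * cov_among U A B * (card B - 1) \<le> f * (cov_among U A (B - {x}) * card B)"
      using drop by (simp add: mult.commute mult.left_commute)
    also have "\<dots> \<le> cov_among U A F * (card B - 1) * card B"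
      using avg by (simp add: mult.assoc[symmetric])
    finally have "f * cov_among U A B \<le> cov_among U A F * card B"
      using False Suc.hyps(2) by (simp add: mult.commute mult.left_commute)
    then show ?thesis using F by blast
  qed
qed

lemma cov_le: "cov n A W \<le> n"
proof -
  have "cov n A W \<le> card {1..n}"
    unfolding cov_def by (rule card_mono) auto
  then show ?thesis by simp
qed

lemma max_cov_attained:
  assumes "is_instance C n A k"
  shows "\<exists>B. B \<subseteq> C \<and> card B = k \<and> cov n A B = max_cov C n A k"
proof -
  let ?S = "{W'. W' \<subseteq> C \<and> card W' = k}"
  have fin: "finite C" and "k \<le> card C"
    using assms by (auto simp: is_instance_def)
  then obtain B0 where "B0 \<subseteq> C" "card B0 = k"
    by (meson obtain_subset_with_card_n)
  then have "cov n A ` ?S \<noteq> {}"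
    by blast
  moreover have "finite (cov n A ` ?S)"
    using fin by simp
  ultimately have "Max (cov n A ` ?S) \<in> cov n A ` ?S"
    by (rule Max_in[rotated])
  moreover have "max_cov C n A k = Max (cov n A ` ?S)"
    unfolding max_cov_def by (rule arg_cong[where f = Max]) blast
  ultimately show ?thesis by auto
qed

lemma rep_ratio_geI:
  assumes "r \<le> 1" "r * real (max_cov C n A k) \<le> real (cov n A W)"
  shows "r \<le> rep_ratio C n A k W"
proof (cases "max_cov C n A k = 0")
  case False
  then show ?thesis
    using assms(2) by (simp add: rep_ratio_def pos_le_divide_eq)
qed (simp add: rep_ratio_def assms(1))

lemma three_quarters_le:
  fixes w opt n :: real
  assumes "0 \<le> w" "w \<le> opt" "opt \<le> n"
  shows "3/4 * opt \<le> w + (1 - w / n) * (opt - w)"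
proof (cases "opt = 0")
  case True
  then show ?thesis using assms by simp
next
  case False
  then have opt: "opt > 0" using assms by simp
  have "w / n \<le> w / opt"
    using assms opt by (intro divide_left_mono) simp_all
  then have "(1 - w / opt) * (opt - w) \<le> (1 - w / n) * (opt - w)"
    using assms by (intro mult_right_mono) simp_all
  moreover have "3/4 * opt \<le> w + (1 - w / opt) * (opt - w)"
  proof -
    have "0 \<le> (opt - 2 * w)^2 / (4 * opt)" using opt by simp
    also have "\<dots> = w + (1 - w / opt) * (opt - w) - 3/4 * opt"
      using opt by (simp add: field_simps power2_eq_square)
    finally show ?thesis by simp
  qed
  ultimately show ?thesis by linarith
qed

lemma three_quarters_le_completion:
  fixes a k n w opt y x :: real
  assumes "0 < k" "0 \<le> a" "a \<le> k" "a * n \<le> k * w" "0 \<le> w" "opt \<le> n"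
    and "opt \<le> w + y" "(k - a) * y \<le> k * x" "0 \<le> x"
  shows "3/4 * opt \<le> w + x"
proof (cases "opt \<le> w")
  case True
  then show ?thesis using assms by linarith
next
  case False
  then have "n > 0" using assms by linarith
  then have "a / k \<le> w / n"
    using assms by (simp add: divide_simps mult.commute)
  then have "(1 - w / n) * (opt - w) \<le> (1 - a / k) * y"
    using assms False by (intro mult_mono) simp_all
  also have "\<dots> \<le> x"
    using assms by (simp add: field_simps)
  finally have "(1 - w / n) * (opt - w) \<le> x" .
  moreover have "3/4 * opt \<le> w + (1 - w / n) * (opt - w)"
    using three_quarters_le False assms by simp
  ultimately show ?thesis by linarith
qed

lemma exists_three_quarters_extension:
  assumes inst: "is_instance C n A k" and W: "W \<subseteq> C" "card W \<le> k"
    and paid: "card W * n \<le> k * cov n A W"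
  shows "\<exists>W'. W \<subseteq> W' \<and> is_committee C k W' \<and> 3/4 \<le> rep_ratio C n A k W'"
proof -
  have fin: "finite C" and k: "k \<ge> 1"
    using inst by (auto simp: is_instance_def)
  obtain B where B: "B \<subseteq> C" "card B = k" and opt: "cov n A B = max_cov C n A k"
    using max_cov_attained[OF inst] by blast
  define U where "U = {i\<in>{1..n}. A i \<inter> W = {}}"
  obtain F where F: "F \<subseteq> B" "card F = k - card W"
    and avg: "(k - card W) * cov_among U A B \<le> cov_among U A F * k"
    using exists_subset_cov_among_ge[of U B "k - card W" A] B fin by (auto simp: U_def finite_subset)
  have committee: "is_committee C k (W \<union> F)"
    using W F B card_Un_le[of W F] by (auto simp: is_committee_def)
  have cov_ext: "cov n A (W \<union> F) = cov n A W + cov_among U A F"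
    unfolding cov_eq_cov_among U_def by (simp add: cov_among_Un)
  have "max_cov C n A k \<le> cov n A (W \<union> B)"
    unfolding opt[symmetric] cov_eq_cov_among by (rule cov_among_mono) auto
  also have "\<dots> = cov n A W + cov_among U A B"
    unfolding cov_eq_cov_among U_def by (simp add: cov_among_Un)
  finally have "max_cov C n A k \<le> cov n A W + cov_among U A B" .
  moreover have "max_cov C n A k \<le> n"
    using cov_le opt by metis
  moreover have "(real k - card W) * cov_among U A B \<le> real k * cov_among U A F"
    using avg W(2) by (metis mult.commute of_nat_diff of_nat_le_iff of_nat_mult)
  ultimately have "3/4 * real (max_cov C n A k) \<le> real (cov n A W) + real (cov_among U A F)"
    using paid k W(2)
    by (intro three_quarters_le_completion[where a = "card W" and k = k and n = n and y = "cov_among U A B"])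
      (simp_all flip: of_nat_mult of_nat_add)
  then have "3/4 \<le> rep_ratio C n A k (W \<union> F)"
    by (intro rep_ratio_geI) (simp_all add: cov_ext)
  with committee show ?thesis
    by blast
qed

definition price_system ::
  "nat \<Rightarrow> (nat \<Rightarrow> 'c set) \<Rightarrow> nat \<Rightarrow> 'c set \<Rightarrow> (nat \<Rightarrow> 'c \<Rightarrow> real) \<Rightarrow> bool" where
  "price_system n A k W p \<longleftrightarrow>
     (\<forall>i c. 0 \<le> p i c) \<and>
     (\<forall>i c. p i c \<noteq> 0 \<longrightarrow> i \<in> {1..n} \<and> c \<in> W \<and> A i \<inter> W \<noteq> {}) \<and>
     (\<forall>i. (\<Sum>c\<in>W. p i c) \<le> 1) \<and>
     (\<forall>c\<in>W. real n / real k \<le> (\<Sum>i\<in>{1..n}. p i c))"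

lemma price_system_card_mult_le:
  assumes ps: "price_system n A k W p" and "finite W" "0 < k"
  shows "card W * n \<le> k * cov n A W"
proof -
  define R where "R = {i\<in>{1..n}. A i \<inter> W \<noteq> {}}"
  have unpaid: "(\<Sum>c\<in>W. p i c) = 0" if "i \<in> {1..n} - R" for i
  proof -
    have "A i \<inter> W = {}" using that by (simp add: R_def)
    then have "p i c = 0" for c
      using ps unfolding price_system_def by blast
    then show ?thesis by simp
  qed
  have "real (card W) * (real n / real k) = (\<Sum>c\<in>W. real n / real k)"
    by simp
  also have "\<dots> \<le> (\<Sum>c\<in>W. \<Sum>i\<in>{1..n}. p i c)"
    using ps by (intro sum_mono) (simp add: price_system_def)
  also have "\<dots> = (\<Sum>i\<in>{1..n}. \<Sum>c\<in>W. p i c)"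
    by (rule sum.swap)
  also have "\<dots> = (\<Sum>i\<in>R. \<Sum>c\<in>W. p i c)"
    using unpaid by (intro sum.mono_neutral_right) (auto simp: R_def)
  also have "\<dots> \<le> (\<Sum>i\<in>R. 1)"
    using ps by (intro sum_mono) (simp add: price_system_def)
  also have "\<dots> = real (cov n A W)"
    by (simp add: R_def cov_def)
  finally show ?thesis
    using assms(3) by (simp add: field_simps flip: of_nat_mult)
qed

lemma price_system_extend:
  fixes n k :: nat and S :: "nat set" and q :: real
  defines "q \<equiv> real n / (real k * real (card S))"
  assumes ps: "price_system n A k W p" and fin: "finite W" "finite D" and disj: "D \<inter> W = {}"
    and S: "S \<subseteq> {1..n}" "S \<noteq> {}"
    and budget: "\<And>i. i \<in> S \<Longrightarrow> (\<Sum>c\<in>W. p i c) + card D * q \<le> 1"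
    and covered: "\<And>i. i \<in> S \<Longrightarrow> A i \<inter> (W \<union> D) \<noteq> {}"
  shows "price_system n A k (W \<union> D) (\<lambda>i d. if i \<in> S \<and> d \<in> D then q else p i d)"
    (is "price_system n A k _ ?p")
proof -
  have p_nonneg: "0 \<le> p i c"
    and p_supp: "p i c \<noteq> 0 \<Longrightarrow> i \<in> {1..n} \<and> c \<in> W \<and> A i \<inter> W \<noteq> {}"
    and p_budget: "(\<Sum>c\<in>W. p i c) \<le> 1"
    and p_price: "c \<in> W \<Longrightarrow> real n / real k \<le> (\<Sum>i\<in>{1..n}. p i c)" for i c
    using ps by (auto simp: price_system_def)
  have finS: "finite S" using S finite_subset by blast
  have spent: "(\<Sum>d\<in>W \<union> D. ?p i d) = (\<Sum>c\<in>W. p i c) + (if i \<in> S then card D * q else 0)" for i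
  proof -
    have "(\<Sum>d\<in>W \<union> D. ?p i d) = (\<Sum>d\<in>W. ?p i d) + (\<Sum>d\<in>D. ?p i d)"
      using fin disj by (simp add: sum.union_disjoint Int_commute)
    moreover have "(\<Sum>d\<in>W. ?p i d) = (\<Sum>c\<in>W. p i c)"
      using disj by (intro sum.cong) auto
    moreover have "(\<Sum>d\<in>D. ?p i d) = (if i \<in> S then card D * q else 0)"
      using disj p_supp by (auto intro: sum.neutral)
    ultimately show ?thesis by simp
  qed
  have nonneg: "0 \<le> ?p i d" for i d
    using p_nonneg by (simp add: q_def)
  have supp: "i \<in> {1..n} \<and> d \<in> W \<union> D \<and> A i \<inter> (W \<union> D) \<noteq> {}" if "?p i d \<noteq> 0" for i d
  proof (cases "i \<in> S \<and> d \<in> D")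
    case True
    then show ?thesis using S covered by auto
  next
    case False
    then have "p i d \<noteq> 0" using that by argo
    then show ?thesis using p_supp by blast
  qed
  have "(\<Sum>d\<in>W \<union> D. ?p i d) \<le> 1" for i
    using spent budget p_budget by (simp split: if_splits)
  moreover have "real n / real k \<le> (\<Sum>i\<in>{1..n}. ?p i d)" if "d \<in> W \<union> D" for d
  proof (cases "d \<in> D")
    case True
    have "real n / real k = (\<Sum>i\<in>S. q)"
      using S finS by (simp add: q_def)
    also have "\<dots> = (\<Sum>i\<in>{1..n}. if i \<in> S then q else 0)"
      using S by (simp add: sum.If_cases Int_absorb1)
    also have "\<dots> \<le> (\<Sum>i\<in>{1..n}. ?p i d)"
      using True p_nonneg by (intro sum_mono) simp
    finally show ?thesis .
  next
    case False
    then show ?thesis using that p_price by simp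
  qed
  ultimately show ?thesis
    using nonneg supp unfolding price_system_def by blast
qed

lemma exists_good_by_augmentation:
  fixes Inv Good :: "'a set \<Rightarrow> bool"
  assumes "finite C" "Inv {}" and sub: "\<And>W. Inv W \<Longrightarrow> W \<subseteq> C"
    and augment: "\<And>W. Inv W \<Longrightarrow> \<not> Good W \<Longrightarrow> \<exists>W'. Inv W' \<and> card W < card W'"
  shows "\<exists>W. Inv W \<and> Good W"
proof -
  have "\<forall>W. Inv W \<longrightarrow> card W < Suc (card C)"
    using sub card_mono[OF \<open>finite C\<close>] by (simp add: less_Suc_eq_le)
  then obtain W where "Inv W" and max: "\<And>W'. Inv W' \<Longrightarrow> card W' \<le> card W"
    using Lattices_Big.ex_has_greatest_nat[of Inv "{}" card] \<open>Inv {}\<close> by blast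
  then show ?thesis
    using augment by (meson not_le)
qed

lemma share_mult_le_one:
  assumes "real m * real n / real k \<le> real (card S)" "finite S" "S \<noteq> {}"
  shows "real m * (real n / (real k * real (card S))) \<le> 1"
proof -
  have "real (card S) > 0"
    using assms by (simp add: card_gt_0_iff)
  then have "real m * real n / real k / real (card S) \<le> 1"
    using assms(1) by (simp only: divide_le_eq_1_pos)
  then show ?thesis
    by (simp add: divide_divide_eq_left)
qed

definition EJR_plus_violation ::
  "nat \<Rightarrow> (nat \<Rightarrow> 'c set) \<Rightarrow> nat \<Rightarrow> 'c set \<Rightarrow> nat \<Rightarrow> nat set \<Rightarrow> 'c \<Rightarrow> bool" where
  "EJR_plus_violation n A k W l N c \<longleftrightarrow>
     l \<in> {1..k} \<and> N \<subseteq> {1..n} \<and> N \<noteq> {} \<and> real l * real n / real k \<le> real (card N) \<and>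
     (\<forall>i\<in>N. c \<in> A i) \<and> c \<notin> W \<and> (\<forall>i\<in>N. card (A i \<inter> W) < l)"

lemma EJR_plus_iff_no_violation:
  "EJR_plus n A k W \<longleftrightarrow> (\<forall>l N c. \<not> EJR_plus_violation n A k W l N c)"
proof
  assume ejr: "EJR_plus n A k W"
  show "\<forall>l N c. \<not> EJR_plus_violation n A k W l N c"
  proof (intro allI notI)
    fix l N c
    assume v: "EJR_plus_violation n A k W l N c"
    then have l: "l \<in> {1..k}"
      and N: "N \<subseteq> {1..n} \<and> N \<noteq> {} \<and> real l * real n / real k \<le> real (card N) \<and> (\<Inter>i\<in>N. A i) \<noteq> {}"
      and c: "c \<in> (\<Inter>i\<in>N. A i)" "c \<notin> W" and small: "\<forall>i\<in>N. card (A i \<inter> W) < l"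
      unfolding EJR_plus_violation_def by auto
    have "(\<exists>i\<in>N. l \<le> card (A i \<inter> W)) \<or> (\<Inter>i\<in>N. A i) \<subseteq> W"
      using ejr[unfolded EJR_plus_def, rule_format, OF l N] .
    then show False
      using c small by (meson leD subsetD)
  qed
next
  assume none: "\<forall>l N c. \<not> EJR_plus_violation n A k W l N c"
  show "EJR_plus n A k W"
    unfolding EJR_plus_def
  proof (intro ballI allI impI)
    fix l N assume "l \<in> {1..k}" and
      N: "N \<subseteq> {1..n} \<and> N \<noteq> {} \<and> real l * real n / real k \<le> real (card N) \<and> (\<Inter>i\<in>N. A i) \<noteq> {}"
    show "(\<exists>i\<in>N. l \<le> card (A i \<inter> W)) \<or> (\<Inter>i\<in>N. A i) \<subseteq> W"
    proof (rule ccontr)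
      assume "\<not> ?thesis"
      then obtain c where "c \<in> (\<Inter>i\<in>N. A i)" "c \<notin> W" "\<forall>i\<in>N. card (A i \<inter> W) < l"
        by (auto simp: not_le)
      with \<open>l \<in> {1..k}\<close> N have "EJR_plus_violation n A k W l N c"
        unfolding EJR_plus_violation_def by blast
      with none show False by blast
    qed
  qed
qed

lemma EJR_plus_violation_antimono:
  assumes "EJR_plus_violation n A k W' l N c" "W \<subseteq> W'" "finite W'"
  shows "EJR_plus_violation n A k W l N c"
proof -
  have "card (A i \<inter> W) \<le> card (A i \<inter> W')" for i
    using assms(2,3) by (intro card_mono) auto
  then show ?thesis
    using assms(1,2) unfolding EJR_plus_violation_def by (meson le_less_trans subsetD)
qed

lemma EJR_plus_mono: "EJR_plus n A k W \<Longrightarrow> W \<subseteq> W' \<Longrightarrow> finite W' \<Longrightarrow> EJR_plus n A k W'"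
  by (meson EJR_plus_iff_no_violation EJR_plus_violation_antimono)

lemma EJR_plus_no_voters: "EJR_plus 0 A k W"
  by (simp add: EJR_plus_def)

definition EJR_price_system ::
  "nat \<Rightarrow> (nat \<Rightarrow> 'c set) \<Rightarrow> nat \<Rightarrow> 'c set \<Rightarrow> (nat \<Rightarrow> 'c \<Rightarrow> real) \<Rightarrow> bool" where
  "EJR_price_system n A k W p \<longleftrightarrow> price_system n A k W p \<and>
     (\<forall>i c. p i c \<noteq> 0 \<longrightarrow> c \<in> A i) \<and>
     (\<forall>l N c' i c. EJR_plus_violation n A k W l N c' \<longrightarrow> p i c \<le> 1 / real l)"

lemma EJR_price_system_spent_le:
  assumes ps: "EJR_price_system n A k W p" and "finite W"
    and v: "EJR_plus_violation n A k W l N c" and "i \<in> N"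
  shows "(\<Sum>d\<in>W. p i d) \<le> (real l - 1) / real l"
proof -
  have l: "l \<ge> 1" and small: "card (A i \<inter> W) \<le> l - 1"
    using v \<open>i \<in> N\<close> by (fastforce simp: EJR_plus_violation_def)+
  have "(\<Sum>d\<in>W. p i d) = (\<Sum>d\<in>A i \<inter> W. p i d)"
    using ps \<open>finite W\<close> by (intro sum.mono_neutral_right) (auto simp: EJR_price_system_def)
  also have "\<dots> \<le> real (card (A i \<inter> W)) * (1 / real l)"
    using ps v unfolding EJR_price_system_def by (intro sum_bounded_above) blast
  also have "\<dots> \<le> (real l - 1) * (1 / real l)"
    using small l by (intro mult_right_mono) (simp_all add: of_nat_diff[symmetric])
  finally show ?thesis by simp
qed

lemma EJR_price_system_insert:
  assumes ps: "EJR_price_system n A k W p" and "finite W"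
    and v: "EJR_plus_violation n A k W l N c"
    and max: "\<And>l' N' c'. EJR_plus_violation n A k W l' N' c' \<Longrightarrow> l' \<le> l"
  shows "\<exists>p'. EJR_price_system n A k (insert c W) p'"
proof -
  define q where "q = real n / (real k * real (card N))"
  define p' where "p' = (\<lambda>i d. if i \<in> N \<and> d \<in> {c} then q else p i d)"
  have l: "l \<ge> 1" and N: "N \<subseteq> {1..n}" "N \<noteq> {}" "real l * real n / real k \<le> real (card N)"
    and approved: "\<forall>i\<in>N. c \<in> A i" and "c \<notin> W"
    using v by (auto simp: EJR_plus_violation_def)
  have "finite N" using N finite_subset by blast
  then have q_le: "q \<le> 1 / real l"
    using share_mult_le_one[OF N(3)] N l by (simp add: q_def field_simps)
  have "price_system n A k (W \<union> {c}) p'"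
    unfolding p'_def q_def
  proof (rule price_system_extend)
    show "(\<Sum>d\<in>W. p i d) + card {c} * (real n / (real k * real (card N))) \<le> 1" if "i \<in> N" for i
    proof -
      have "(real l - 1) / real l + 1 / real l = 1"
        using l by (simp add: field_simps)
      then show ?thesis
        using EJR_price_system_spent_le[OF ps \<open>finite W\<close> v that] q_le by (simp add: q_def[symmetric])
    qed
  qed (use ps \<open>finite W\<close> \<open>c \<notin> W\<close> N approved in \<open>auto simp: EJR_price_system_def\<close>)
  moreover have "p' i d \<noteq> 0 \<Longrightarrow> d \<in> A i" for i d
    using ps approved by (auto simp: p'_def EJR_price_system_def split: if_splits)
  moreover have "p' i d \<le> 1 / real l'" if "EJR_plus_violation n A k (insert c W) l' N' c'" for l' N' c' i d
  proof -
    have v': "EJR_plus_violation n A k W l' N' c'"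
      using EJR_plus_violation_antimono[OF that subset_insertI] \<open>finite W\<close> by simp
    then have "l' \<le> l" "1 \<le> l'"
      using max by (auto simp: EJR_plus_violation_def)
    have "p i d \<le> 1 / real l'"
      using ps v' unfolding EJR_price_system_def by blast
    moreover have "1 / real l \<le> 1 / real l'"
      using \<open>l' \<le> l\<close> \<open>1 \<le> l'\<close> by (simp add: frac_le)
    ultimately show ?thesis
      using q_le by (auto simp: p'_def)
  qed
  ultimately show ?thesis
    unfolding EJR_price_system_def by auto
qed

lemma exists_EJR_plus_price_system:
  assumes inst: "is_instance C n A k"
  shows "\<exists>W p. W \<subseteq> C \<and> price_system n A k W p \<and> EJR_plus n A k W"
proof -
  have fin: "finite C" and AC: "\<forall>i\<in>{1..n}. A i \<subseteq> C"
    using inst by (auto simp: is_instance_def)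
  define Inv where "Inv W \<longleftrightarrow> W \<subseteq> C \<and> (\<exists>p. EJR_price_system n A k W p)" for W
  have "EJR_price_system n A k {} (\<lambda>_ _. 0)"
    by (simp add: EJR_price_system_def price_system_def)
  then have init: "Inv {}"
    unfolding Inv_def by blast
  have sub: "W \<subseteq> C" if "Inv W" for W
    using that unfolding Inv_def by blast
  have augment: "\<exists>W'. Inv W' \<and> card W < card W'" if "Inv W" "\<not> EJR_plus n A k W" for W
  proof -
    obtain p where W: "W \<subseteq> C" and ps: "EJR_price_system n A k W p"
      using \<open>Inv W\<close> unfolding Inv_def by blast
    have "finite W" using W fin finite_subset by blast
    obtain l0 N0 c0 where "EJR_plus_violation n A k W l0 N0 c0"
      using \<open>\<not> EJR_plus n A k W\<close> EJR_plus_iff_no_violation by blast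
    moreover have "\<forall>l. (\<exists>N c. EJR_plus_violation n A k W l N c) \<longrightarrow> l \<le> k"
      by (auto simp: EJR_plus_violation_def)
    ultimately obtain l N c where v: "EJR_plus_violation n A k W l N c"
      and max: "\<And>l' N' c'. EJR_plus_violation n A k W l' N' c' \<Longrightarrow> l' \<le> l"
      using Nat.ex_has_greatest_nat[of "\<lambda>l. \<exists>N c. EJR_plus_violation n A k W l N c" l0 k] by blast
    have "c \<in> C" "c \<notin> W"
      using v AC unfolding EJR_plus_violation_def by blast+
    then have "Inv (insert c W) \<and> card W < card (insert c W)"
      using EJR_price_system_insert[OF ps \<open>finite W\<close> v max] W \<open>finite W\<close> by (simp add: Inv_def)
    then show ?thesis by blast
  qed
  obtain W where "Inv W" "EJR_plus n A k W"
    using exists_good_by_augmentation[OF fin init sub augment] by blast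
  then show ?thesis
    unfolding Inv_def EJR_price_system_def by blast
qed

definition FJR_violation ::
  "'c set \<Rightarrow> nat \<Rightarrow> (nat \<Rightarrow> 'c set) \<Rightarrow> nat \<Rightarrow> 'c set \<Rightarrow> nat \<Rightarrow> 'c set \<Rightarrow> nat set \<Rightarrow> bool" where
  "FJR_violation C n A k W \<beta> T S \<longleftrightarrow> 1 \<le> \<beta> \<and> T \<subseteq> C \<and> S \<subseteq> {1..n} \<and> S \<noteq> {} \<and>
     weakly_cohesive n A k \<beta> T S \<and> (\<forall>i\<in>S. card (A i \<inter> W) < \<beta>)"

lemma FJR_iff_no_violation: "FJR C n A k W \<longleftrightarrow> (\<forall>\<beta> T S. \<not> FJR_violation C n A k W \<beta> T S)"
  unfolding FJR_def FJR_violation_def by (meson not_le)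

lemma FJR_violation_antimono:
  assumes "FJR_violation C n A k W' \<beta> T S" "W \<subseteq> W'" "finite W'"
  shows "FJR_violation C n A k W \<beta> T S"
proof -
  have "card (A i \<inter> W) \<le> card (A i \<inter> W')" for i
    using assms(2,3) by (intro card_mono) auto
  then show ?thesis
    using assms(1) unfolding FJR_violation_def by (meson le_less_trans)
qed

lemma FJR_mono: "FJR C n A k W \<Longrightarrow> W \<subseteq> W' \<Longrightarrow> finite W' \<Longrightarrow> FJR C n A k W'"
  by (meson FJR_iff_no_violation FJR_violation_antimono)

lemma FJR_no_voters: "FJR C 0 A k W"
  by (simp add: FJR_def)

lemma FJR_violation_not_subset:
  assumes "FJR_violation C n A k W \<beta> T S" "finite W"
  shows "\<not> T \<subseteq> W"
proof
  assume "T \<subseteq> W"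
  obtain i where "i \<in> S" "\<beta> \<le> card (A i \<inter> T)" "card (A i \<inter> W) < \<beta>"
    using assms(1) unfolding FJR_violation_def weakly_cohesive_def by blast
  moreover have "card (A i \<inter> T) \<le> card (A i \<inter> W)"
    using \<open>T \<subseteq> W\<close> assms(2) by (intro card_mono) auto
  ultimately show False by simp
qed

definition FJR_price_system ::
  "'c set \<Rightarrow> nat \<Rightarrow> (nat \<Rightarrow> 'c set) \<Rightarrow> nat \<Rightarrow> 'c set \<Rightarrow> (nat \<Rightarrow> 'c \<Rightarrow> real) \<Rightarrow> bool" where
  "FJR_price_system C n A k W p \<longleftrightarrow> price_system n A k W p \<and>
     (\<forall>i c \<beta> T S. p i c \<noteq> 0 \<longrightarrow> FJR_violation C n A k W \<beta> T S \<longrightarrow> \<beta> \<le> card (A i \<inter> W))"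

lemma FJR_price_system_Un:
  assumes ps: "FJR_price_system C n A k W p" and "finite C" "finite W"
    and v: "FJR_violation C n A k W \<beta> T S"
    and max: "\<And>\<beta>' T' S'. FJR_violation C n A k W \<beta>' T' S' \<Longrightarrow> \<beta>' \<le> \<beta>"
  shows "\<exists>p'. FJR_price_system C n A k (W \<union> T) p'"
proof -
  define q where "q = real n / (real k * real (card S))"
  define p' where "p' = (\<lambda>i d. if i \<in> S \<and> d \<in> T - W then q else p i d)"
  have \<beta>: "\<beta> \<ge> 1" and "T \<subseteq> C" and S: "S \<subseteq> {1..n}" "S \<noteq> {}"
    and large: "real (card T) * real n / real k \<le> real (card S)"
    and cohesive: "\<forall>i\<in>S. \<beta> \<le> card (A i \<inter> T)" and unsatisfied: "\<forall>i\<in>S. card (A i \<inter> W) < \<beta>"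
    using v unfolding FJR_violation_def weakly_cohesive_def by blast+
  have "finite T" "finite S"
    using \<open>T \<subseteq> C\<close> \<open>finite C\<close> S finite_subset by blast+
  have unpaid: "p i d = 0" if "i \<in> S" for i d
    using ps v that unsatisfied unfolding FJR_price_system_def by (meson leD)
  have share: "real (card T) * q \<le> 1"
    unfolding q_def using share_mult_le_one[OF large \<open>finite S\<close> S(2)] .
  have "price_system n A k (W \<union> (T - W)) p'"
    unfolding p'_def q_def
  proof (rule price_system_extend)
    show "(\<Sum>d\<in>W. p i d) + card (T - W) * (real n / (real k * real (card S))) \<le> 1" if "i \<in> S" for i
    proof -
      have "real (card (T - W)) * q \<le> real (card T) * q"
        using \<open>finite T\<close> by (intro mult_right_mono) (simp_all add: card_mono q_def)
      then show ?thesis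
        using share unpaid that by (simp add: q_def[symmetric])
    qed
    show "A i \<inter> (W \<union> (T - W)) \<noteq> {}" if "i \<in> S" for i
    proof -
      have "card (A i \<inter> T) \<noteq> 0"
        using cohesive \<beta> that by fastforce
      then have "A i \<inter> T \<noteq> {}"
        by (metis card.empty)
      then show ?thesis by blast
    qed
  qed (use ps \<open>finite W\<close> \<open>finite T\<close> S in \<open>auto simp: FJR_price_system_def\<close>)
  moreover have "\<beta>' \<le> card (A i \<inter> (W \<union> T))"
    if "p' i d \<noteq> 0" "FJR_violation C n A k (W \<union> T) \<beta>' T' S'" for i d \<beta>' T' S'
  proof -
    have v': "FJR_violation C n A k W \<beta>' T' S'"
      using FJR_violation_antimono[OF that(2)] \<open>finite W\<close> \<open>finite T\<close> by simp
    have "\<beta>' \<le> card (A i \<inter> W) \<or> \<beta>' \<le> card (A i \<inter> T)"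
    proof (cases "i \<in> S \<and> d \<in> T - W")
      case True
      then show ?thesis using max[OF v'] cohesive by fastforce
    next
      case False
      then have "p i d \<noteq> 0" using that(1) unfolding p'_def by argo
      then show ?thesis using ps v' unfolding FJR_price_system_def by blast
    qed
    moreover have "card (A i \<inter> W) \<le> card (A i \<inter> (W \<union> T))" "card (A i \<inter> T) \<le> card (A i \<inter> (W \<union> T))"
      using \<open>finite W\<close> \<open>finite T\<close> by (intro card_mono; auto)+
    ultimately show ?thesis by linarith
  qed
  ultimately show ?thesis
    unfolding FJR_price_system_def by (metis Un_Diff_cancel)
qed

lemma exists_FJR_price_system:
  assumes inst: "is_instance C n A k"
  shows "\<exists>W p. W \<subseteq> C \<and> price_system n A k W p \<and> FJR C n A k W"
proof -
  have fin: "finite C"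
    using inst by (simp add: is_instance_def)
  define Inv where "Inv W \<longleftrightarrow> W \<subseteq> C \<and> (\<exists>p. FJR_price_system C n A k W p)" for W
  have "FJR_price_system C n A k {} (\<lambda>_ _. 0)"
    by (simp add: FJR_price_system_def price_system_def)
  then have init: "Inv {}"
    unfolding Inv_def by blast
  have sub: "W \<subseteq> C" if "Inv W" for W
    using that unfolding Inv_def by blast
  have augment: "\<exists>W'. Inv W' \<and> card W < card W'" if "Inv W" "\<not> FJR C n A k W" for W
  proof -
    obtain p where W: "W \<subseteq> C" and ps: "FJR_price_system C n A k W p"
      using \<open>Inv W\<close> unfolding Inv_def by blast
    have "finite W" using W fin finite_subset by blast
    obtain \<beta>0 T0 S0 where "FJR_violation C n A k W \<beta>0 T0 S0"
      using \<open>\<not> FJR C n A k W\<close> FJR_iff_no_violation by blast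
    moreover have "\<forall>\<beta>. (\<exists>T S. FJR_violation C n A k W \<beta> T S) \<longrightarrow> \<beta> \<le> card C"
    proof (intro allI impI)
      fix \<beta> assume "\<exists>T S. FJR_violation C n A k W \<beta> T S"
      then obtain T S i where "T \<subseteq> C" "i \<in> S" "\<beta> \<le> card (A i \<inter> T)"
        unfolding FJR_violation_def weakly_cohesive_def by blast
      moreover have "card (A i \<inter> T) \<le> card C"
        using \<open>T \<subseteq> C\<close> fin by (intro card_mono) auto
      ultimately show "\<beta> \<le> card C" by linarith
    qed
    ultimately obtain \<beta> T S where v: "FJR_violation C n A k W \<beta> T S"
      and max: "\<And>\<beta>' T' S'. FJR_violation C n A k W \<beta>' T' S' \<Longrightarrow> \<beta>' \<le> \<beta>"
      using Nat.ex_has_greatest_nat[of "\<lambda>\<beta>. \<exists>T S. FJR_violation C n A k W \<beta> T S" \<beta>0 "card C"] by blast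
    have "T \<subseteq> C" using v by (simp add: FJR_violation_def)
    then have "Inv (W \<union> T)"
      using FJR_price_system_Un[OF ps fin \<open>finite W\<close> v max] W by (simp add: Inv_def)
    moreover have "card W < card (W \<union> T)"
      using FJR_violation_not_subset[OF v \<open>finite W\<close>] \<open>T \<subseteq> C\<close> fin \<open>finite W\<close>
      by (intro psubset_card_mono) (auto intro: finite_subset)
    ultimately show ?thesis by blast
  qed
  obtain W where "Inv W" "FJR C n A k W"
    using exists_good_by_augmentation[OF fin init sub augment] by blast
  then show ?thesis
    unfolding Inv_def FJR_price_system_def by blast
qed

lemma exists_three_quarters_committee:
  assumes inst: "is_instance C n A k"
    and mono: "\<And>W W'. P W \<Longrightarrow> W \<subseteq> W' \<Longrightarrow> finite W' \<Longrightarrow> P W'"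
    and no_voters: "n = 0 \<Longrightarrow> P {}"
    and priced: "\<exists>W p. W \<subseteq> C \<and> price_system n A k W p \<and> P W"
  shows "\<exists>W. is_committee C k W \<and> 3/4 \<le> rep_ratio C n A k W \<and> P W"
proof -
  have fin: "finite C" and k: "k \<ge> 1"
    using inst by (auto simp: is_instance_def)
  obtain W where W: "W \<subseteq> C" "card W \<le> k" "card W * n \<le> k * cov n A W" and "P W"
  proof (cases "n = 0")
    case True
    then show ?thesis using no_voters by (intro that[of "{}"]) auto
  next
    case False
    obtain W p where W: "W \<subseteq> C" and ps: "price_system n A k W p" and "P W"
      using priced by blast
    have "finite W"
      using W fin finite_subset by blast
    then have paid: "card W * n \<le> k * cov n A W"
      using price_system_card_mult_le[OF ps] k by simp
    also have "\<dots> \<le> k * n"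
      by (simp add: cov_le)
    finally have "card W \<le> k"
      using False by simp
    with W paid \<open>P W\<close> show ?thesis
      by (intro that)
  qed
  then obtain W' where "W \<subseteq> W'" "is_committee C k W'" "3/4 \<le> rep_ratio C n A k W'"
    using exists_three_quarters_extension[OF inst] by blast
  moreover have "finite W'"
    using \<open>is_committee C k W'\<close> fin finite_subset by (auto simp: is_committee_def)
  ultimately show ?thesis
    using mono \<open>P W\<close> by blast
qed

theorem corollary4:
  fixes C :: "'c set" and n :: nat and A :: "nat \<Rightarrow> 'c set" and k :: nat
  assumes "is_instance C n A k"
  shows "\<exists>W W'. is_committee C k W \<and> rep_ratio C n A k W \<ge> 3/4 \<and> EJR_plus n A k W
              \<and> is_committee C k W' \<and> rep_ratio C n A k W' \<ge> 3/4 \<and> FJR C n A k W'"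
proof -
  obtain W where "is_committee C k W" "3/4 \<le> rep_ratio C n A k W" "EJR_plus n A k W"
    using exists_three_quarters_committee[OF assms, of "EJR_plus n A k"]
      EJR_plus_mono EJR_plus_no_voters exists_EJR_plus_price_system[OF assms] by blast
  moreover obtain W' where "is_committee C k W'" "3/4 \<le> rep_ratio C n A k W'" "FJR C n A k W'"
    using exists_three_quarters_committee[OF assms, of "FJR C n A k"]
      FJR_mono FJR_no_voters exists_FJR_price_system[OF assms] by blast
  ultimately show ?thesis
    by blast
qed

end
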